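(* Let $(y_i,x_i)\in\mathbb{R}^3\times\mathbb{R}^3$ be a point pair. There is a symmetric $4\times 4$ matrix $Q_i$ such that for every rotation $R_0\in SO(3)$ and every unit quaternion representation $w_0\in\mathbb{S}^3$ of $R_0$, $$\|y_i-R_0x_i\|_2^2=w_0^\top Q_i w_0 .$$ Moreover, $Q_i$ is positive semidefinite and its eigenvalues (counted with multiplicity) are $$(\|y_i\|_2+\|x_i\|_2)^2,\ (\|y_i\|_2+\|x_i\|_2)^2,\ (\|y_i\|_2-\|x_i\|_2)^2,\ (\|y_i\|_2-\|x_i\|_2)^2 .$$
   Context: $\mathbb{S}^3$ is the unit sphere in $\mathbb{R}^4$. For $w=[w_1;w_2;w_3;w_4]\in\mathbb{S}^3$ let $$R(w)=\begin{bmatrix} w_1^2+w_2^2-w_3^2-w_4^2 & 2(w_2w_3-w_1w_4) & 2(w_2w_4+w_1w_3)\\ 2(w_2w_3+w_1w_4) & w_1^2+w_3^2-w_2^2-w_4^2 & 2(w_3w_4-w_1w_2)\\ 2(w_2w_4-w_1w_3) & 2(w_3w_4+w_1w_2) & w_1^2+w_4^2-w_2^2-w_3^2\end{bmatrix}.$$ Every $R(w)$ is in $SO(3)$ and every $R\in SO(3)$ equals $R(w)$ for exactly two unit quaternions $\pm w$, called the unit quaternion representations of $R$. *)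

theory Defs
  imports "HOL-Analysis.Analysis"
begin

definition quat_rot :: "real^4 \<Rightarrow> real^3^3" where
  "quat_rot w = (let w1 = w$1; w2 = w$2; w3 = w$3; w4 = w$4 in
     vector [
       vector [w1^2+w2^2-w3^2-w4^2, 2*(w2*w3-w1*w4), 2*(w2*w4+w1*w3)],
       vector [2*(w2*w3+w1*w4), w1^2+w3^2-w2^2-w4^2, 2*(w3*w4-w1*w2)],
       vector [2*(w2*w4-w1*w3), 2*(w3*w4+w1*w2), w1^2+w4^2-w2^2-w3^2]])"

definition SO3 :: "(real^3^3) set" where
  "SO3 = {R. orthogonal_matrix R \<and> det R = 1}"

definition psd :: "real^'n^'n \<Rightarrow> bool" where
  "psd Q \<longleftrightarrow> (\<forall>v. 0 \<le> v \<bullet> (Q *v v))"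

text \<open>Characteristic polynomial of a square matrix, evaluated at t: det(tI - Q).
  Its roots with multiplicity are the eigenvalues counted with multiplicity.\<close>
definition charpoly_eval :: "real^'n^'n \<Rightarrow> real \<Rightarrow> real" where
  "charpoly_eval Q t = det (mat t - Q)"

end

(* Expanding the square and using that rotations preserve norms, the residual is
   |x|^2 + |y|^2 - 2 y . R(w) x.  The cross term is a quadratic form in w with a symmetric
   4x4 matrix M (Horn's matrix), and on the unit sphere the constant equals (|x|^2 + |y|^2) w . w,
   so Q = (|x|^2 + |y|^2) I - 2 M.  Since |M v| = |x| |y| |v|, Cauchy-Schwarz gives
   v . M v <= |x| |y| |v|^2, i.e. Q >= (|x| - |y|)^2 I >= 0; and M is traceless with
   M^2 = |x|^2 |y|^2 I, so its eigenvalues are +-|x| |y|, each twice, which yields the spectrum of Q. *)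

theory Submission
  imports Defs
begin

lemma det_4:
  "det (A::'a::comm_ring_1^4^4) =
    A$1$1 * A$2$2 * A$3$3 * A$4$4
    - A$1$1 * A$2$2 * A$3$4 * A$4$3
    - A$1$1 * A$2$3 * A$3$2 * A$4$4
    + A$1$1 * A$2$3 * A$3$4 * A$4$2
    + A$1$1 * A$2$4 * A$3$2 * A$4$3
    - A$1$1 * A$2$4 * A$3$3 * A$4$2
    - A$1$2 * A$2$1 * A$3$3 * A$4$4
    + A$1$2 * A$2$1 * A$3$4 * A$4$3
    + A$1$2 * A$2$3 * A$3$1 * A$4$4
    - A$1$2 * A$2$3 * A$3$4 * A$4$1
    - A$1$2 * A$2$4 * A$3$1 * A$4$3
    + A$1$2 * A$2$4 * A$3$3 * A$4$1
    + A$1$3 * A$2$1 * A$3$2 * A$4$4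
    - A$1$3 * A$2$1 * A$3$4 * A$4$2
    - A$1$3 * A$2$2 * A$3$1 * A$4$4
    + A$1$3 * A$2$2 * A$3$4 * A$4$1
    + A$1$3 * A$2$4 * A$3$1 * A$4$2
    - A$1$3 * A$2$4 * A$3$2 * A$4$1
    - A$1$4 * A$2$1 * A$3$2 * A$4$3
    + A$1$4 * A$2$1 * A$3$3 * A$4$2
    + A$1$4 * A$2$2 * A$3$1 * A$4$3
    - A$1$4 * A$2$2 * A$3$3 * A$4$1
    - A$1$4 * A$2$3 * A$3$1 * A$4$2
    + A$1$4 * A$2$3 * A$3$2 * A$4$1"
proof -
  have "finite {2::4, 3, 4}" "1 \<notin> {2::4, 3, 4}"
    and "finite {3::4, 4}" "2 \<notin> {3::4, 4}"
    and "finite {4::4}" "3 \<notin> {4::4}"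
    by auto
  then show ?thesis
    unfolding det_def UNIV_4
    by (simp add: sum_over_permutations_insert permutes_sing sign_swap_id permutation_swap_id
        sign_compose permutation_compose swap_id_eq algebra_simps)
qed

lemma vector_4 [simp]:
  "(vector [a, b, c, d] :: ('a::zero)^4) $ 1 = a"
  "(vector [a, b, c, d] :: ('a::zero)^4) $ 2 = b"
  "(vector [a, b, c, d] :: ('a::zero)^4) $ 3 = c"
  "(vector [a, b, c, d] :: ('a::zero)^4) $ 4 = d"
  unfolding vector_def by simp_all

lemma inner_vec_3: "(a::real^3) \<bullet> b = a$1 * b$1 + a$2 * b$2 + a$3 * b$3"
  by (simp add: inner_vec_def sum_3)

lemma inner_vec_4: "(a::real^4) \<bullet> b = a$1 * b$1 + a$2 * b$2 + a$3 * b$3 + a$4 * b$4"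
  by (simp add: inner_vec_def sum_4)

text \<open>In block form this is
  \<open>[[x \<bullet> y, (x \<times> y)\<^sup>T], [x \<times> y, x y\<^sup>T + y x\<^sup>T - (x \<bullet> y) I]]\<close>,
  the matrix of the quadratic form \<open>w \<mapsto> y \<bullet> (quat_rot w *v x)\<close>.\<close>
definition quat_pairing_matrix :: "real^3 \<Rightarrow> real^3 \<Rightarrow> real^4^4" where
  "quat_pairing_matrix x y = vector [
     vector [x$1*y$1 + x$2*y$2 + x$3*y$3, x$2*y$3 - x$3*y$2, x$3*y$1 - x$1*y$3, x$1*y$2 - x$2*y$1],
     vector [x$2*y$3 - x$3*y$2, x$1*y$1 - x$2*y$2 - x$3*y$3, x$1*y$2 + x$2*y$1, x$1*y$3 + x$3*y$1],
     vector [x$3*y$1 - x$1*y$3, x$1*y$2 + x$2*y$1, x$2*y$2 - x$1*y$1 - x$3*y$3, x$2*y$3 + x$3*y$2],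
     vector [x$1*y$2 - x$2*y$1, x$1*y$3 + x$3*y$1, x$2*y$3 + x$3*y$2, x$3*y$3 - x$1*y$1 - x$2*y$2]]"

definition point_pair_matrix :: "real^3 \<Rightarrow> real^3 \<Rightarrow> real^4^4" where
  "point_pair_matrix x y = mat (x \<bullet> x + y \<bullet> y) - 2 *\<^sub>R quat_pairing_matrix x y"

lemma transpose_point_pair_matrix: "transpose (point_pair_matrix x y) = point_pair_matrix x y"
  unfolding vec_eq_iff forall_4 transpose_def point_pair_matrix_def quat_pairing_matrix_def mat_def
  by simp

lemma quat_pairing_matrix_form: "w \<bullet> (quat_pairing_matrix x y *v w) = y \<bullet> (quat_rot w *v x)"
  unfolding inner_vec_4 inner_vec_3 matrix_vector_mult_def
  by (simp add: sum_4 sum_3 quat_pairing_matrix_def quat_rot_def Let_def) algebra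

lemma norm_quat_pairing_matrix_mult: "norm (quat_pairing_matrix x y *v v) = norm x * norm y * norm v"
proof -
  have "(quat_pairing_matrix x y *v v) \<bullet> (quat_pairing_matrix x y *v v) = (x \<bullet> x) * (y \<bullet> y) * (v \<bullet> v)"
    unfolding inner_vec_4 inner_vec_3 matrix_vector_mult_def
    by (simp add: sum_4 quat_pairing_matrix_def) algebra
  then show ?thesis
    by (simp add: norm_eq_sqrt_inner real_sqrt_mult)
qed

lemma point_pair_matrix_form:
  "w \<bullet> (point_pair_matrix x y *v w) = (x \<bullet> x + y \<bullet> y) * (w \<bullet> w) - 2 * (y \<bullet> (quat_rot w *v x))"
  unfolding point_pair_matrix_def quat_pairing_matrix_form[symmetric]
  by (simp add: algebra_simps inner_vec_4 matrix_vector_mult_def sum_4 mat_def)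

lemma psd_point_pair_matrix: "psd (point_pair_matrix x y)"
  unfolding psd_def
proof
  fix v :: "real^4"
  let ?M = "quat_pairing_matrix x y"
  have "v \<bullet> (?M *v v) \<le> norm x * norm y * (norm v)^2"
    using norm_cauchy_schwarz[of v "?M *v v"]
    by (simp add: norm_quat_pairing_matrix_mult power2_eq_square algebra_simps)
  moreover have "v \<bullet> (point_pair_matrix x y *v v) = ((norm x)^2 + (norm y)^2) * (norm v)^2 - 2 * (v \<bullet> (?M *v v))"
    by (simp add: point_pair_matrix_form quat_pairing_matrix_form power2_norm_eq_inner)
  moreover have "0 \<le> (norm x - norm y)^2 * (norm v)^2"
    by simp
  ultimately show "0 \<le> v \<bullet> (point_pair_matrix x y *v v)"
    by (simp add: power2_eq_square algebra_simps)
qed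

lemma charpoly_eval_point_pair_matrix:
  "charpoly_eval (point_pair_matrix x y) t = (t - (norm y + norm x)^2)^2 * (t - (norm y - norm x)^2)^2"
proof -
  have "charpoly_eval (point_pair_matrix x y) t = ((t - x \<bullet> x - y \<bullet> y)^2 - 4 * (x \<bullet> x) * (y \<bullet> y))^2"
    unfolding charpoly_eval_def det_4
    by (simp add: point_pair_matrix_def quat_pairing_matrix_def mat_def inner_vec_3) algebra
  also have "\<dots> = (t - (norm y + norm x)^2)^2 * (t - (norm y - norm x)^2)^2"
    unfolding dot_square_norm by algebra
  finally show ?thesis .
qed

lemma norm_diff_orthogonal_matrix_mult_squared:
  fixes R :: "real^'n^'n"
  assumes "orthogonal_matrix R"
  shows "(norm (y - R *v x))^2 = x \<bullet> x + y \<bullet> y - 2 * (y \<bullet> (R *v x))"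
proof -
  have "orthogonal_transformation (\<lambda>u. R *v u)"
    using assms by (simp add: orthogonal_transformation_matrix)
  then have "(R *v x) \<bullet> (R *v x) = x \<bullet> x"
    by (metis orthogonal_transformation_norm dot_square_norm)
  then show ?thesis
    by (simp add: power2_norm_eq_inner inner_diff_left inner_diff_right inner_commute)
qed

theorem lemma2p1:
  fixes y x :: "real^3"
  shows "\<exists>Q :: real^4^4.
           transpose Q = Q \<and>
           (\<forall>R0 w0. R0 \<in> SO3 \<and> norm w0 = 1 \<and> quat_rot w0 = R0 \<longrightarrow>
                (norm (y - R0 *v x))^2 = w0 \<bullet> (Q *v w0)) \<and>
           psd Q \<and>
           (\<forall>t. charpoly_eval Q t =
                 (t - (norm y + norm x)^2)^2 * (t - (norm y - norm x)^2)^2)"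
proof (intro exI[of _ "point_pair_matrix x y"] conjI allI impI)
  fix R0 w0
  assume "R0 \<in> SO3 \<and> norm w0 = 1 \<and> quat_rot w0 = R0"
  then have R0: "R0 = quat_rot w0" and "orthogonal_matrix R0" and "w0 \<bullet> w0 = 1"
    by (auto simp: SO3_def norm_eq_1)
  then have "(norm (y - R0 *v x))^2 = x \<bullet> x + y \<bullet> y - 2 * (y \<bullet> (quat_rot w0 *v x))"
    by (metis norm_diff_orthogonal_matrix_mult_squared)
  also have "\<dots> = w0 \<bullet> (point_pair_matrix x y *v w0)"
    using \<open>w0 \<bullet> w0 = 1\<close> by (simp only: point_pair_matrix_form mult_1_right)
  finally show "(norm (y - R0 *v x))^2 = w0 \<bullet> (point_pair_matrix x y *v w0)" .
qed (rule transpose_point_pair_matrix psd_point_pair_matrix charpoly_eval_point_pair_matrix)+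

end
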